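(* Let $\mathcal N$ be a network with parties $A_1,\dots,A_n$ all of whose sources are bipartite, let $p$ be the output distribution of a causally consistent model on $\mathcal N$ (finite output alphabets), and let $f_i$ be arbitrary complex-valued functions of the outputs $a_i$. Let $\epsilon$ assign to each source $\alpha$ a complex number $\epsilon(\alpha)$ with $|\epsilon(\alpha)|=1$, and let $\Gamma_\epsilon=(\gamma_{ij})$ be an $n\times n$ Hermitian matrix with $\gamma_{ii}=1$, $\gamma_{ij}=\epsilon(\alpha)$ if $i<j$ and $\alpha\to i,j$, and $\gamma_{ij}=\overline{\epsilon(\alpha)}$ if $i>j$ and $\alpha\to i,j$ (other entries arbitrary). Then $\mathcal C(f_1,\dots,f_n)\circ\Gamma_\epsilon$ is positive semidefinite.
   Context: A network $\mathcal N$ is a bipartite graph between sources $S_\alpha$ and parties $A_i$ ($i=1,\dots,n$); $\alpha\to i$ means $S_\alpha$ is adjacent to $A_i$; no isolated vertices, and no two sources with comparable sets of adjacent parties. Here every source is adjacent to exactly two parties. Covariance matrix: $\mathcal C(f_1,\dots,f_n)_{ij}=\mathbb E[\bar f_i f_j]-\mathbb E[\bar f_i]\,\mathbb E[f_j]$. The Schur product is $(M\circ N)_{ij}=M_{ij}N_{ij}$. Non-fanout inflation of order $d\ge 2$: choose, for every pair $(\alpha,i)$ with $\alpha\to i$, a permutation $\pi_i^\alpha$ of $\{1,\dots,d\}$. The inflated network has parties $A_i^{(k)}$ and sources $S_\alpha^{(k)}$ ($1\le k\le d$), with $S_\alpha^{(k)}$ adjacent to $A_i^{((\pi_i^\alpha)^{-1}(k))}$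 whenever $\alpha\to i$, and no other adjacencies. Causally consistent model on $\mathcal N$: a joint distribution $p(a_1,\dots,a_n)$ of the outputs of $\mathcal N$ together with, for every non-fanout inflation of every order $d\ge2$, a joint distribution of the outputs $a_i^{(k)}$ of its parties, such that: (C0) if $A_i\neq A_j$ share no source in $\mathcal N$, then $p(a_i,a_j)=p(a_i)p(a_j)$; (C1) in every inflation, each $a_i^{(k)}$ has marginal $p(a_i)$, and if $A_i^{(k)}$ and $A_j^{(l)}$ with $i\neq j$ share a source in the inflation, then $(a_i^{(k)},a_j^{(l)})$ has joint distribution $p(a_i,a_j)$; (C2) in every inflation, if two distinct parties share no source, the joint distribution of their outputs is the product of their marginals. *)

theory Defs
  imports "HOL-Probability.Probability"
begin

text \<open>Network with parties 1..n (indices i in {1..n}) and a finite set S of sources;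
  adj alpha is the set of parties adjacent to source alpha (alpha -> i iff i in adj alpha).\<close>

definition bipartite_network :: "nat \<Rightarrow> 's set \<Rightarrow> ('s \<Rightarrow> nat set) \<Rightarrow> bool" where
  "bipartite_network n S adj \<longleftrightarrow>
     finite S \<and>
     (\<forall>\<alpha>\<in>S. adj \<alpha> \<subseteq> {1..n} \<and> card (adj \<alpha>) = 2) \<and>
     (\<forall>i\<in>{1..n}. \<exists>\<alpha>\<in>S. i \<in> adj \<alpha>) \<and>
     (\<forall>\<alpha>\<in>S. \<forall>\<beta>\<in>S. \<alpha> \<noteq> \<beta> \<longrightarrow> \<not> (adj \<alpha> \<subseteq> adj \<beta>))"

definition share_source :: "'s set \<Rightarrow> ('s \<Rightarrow> nat set) \<Rightarrow> nat \<Rightarrow> nat \<Rightarrow> bool" where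
  "share_source S adj i j \<longleftrightarrow> (\<exists>\<alpha>\<in>S. i \<in> adj \<alpha> \<and> j \<in> adj \<alpha>)"

definition valid_perms :: "nat \<Rightarrow> 's set \<Rightarrow> ('s \<Rightarrow> nat set) \<Rightarrow> ('s \<Rightarrow> nat \<Rightarrow> nat \<Rightarrow> nat) \<Rightarrow> bool" where
  "valid_perms d S adj \<pi> \<longleftrightarrow> (\<forall>\<alpha>\<in>S. \<forall>i\<in>adj \<alpha>. \<pi> \<alpha> i permutes {1..d})"

text \<open>In the inflation, party A_i^(k) is adjacent to source S_alpha^(pi alpha i k) (alpha -> i),
  since S_alpha^(m) is adjacent to A_i^((pi alpha i)^-1 m).
  infl_share: parties (i,k) and (j,l) share a source in the inflation.\<close>
definition infl_share :: "'s set \<Rightarrow> ('s \<Rightarrow> nat set) \<Rightarrow> ('s \<Rightarrow> nat \<Rightarrow> nat \<Rightarrow> nat)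
    \<Rightarrow> nat \<times> nat \<Rightarrow> nat \<times> nat \<Rightarrow> bool" where
  "infl_share S adj \<pi> p q \<longleftrightarrow>
     (\<exists>\<alpha>\<in>S. fst p \<in> adj \<alpha> \<and> fst q \<in> adj \<alpha> \<and> \<pi> \<alpha> (fst p) (snd p) = \<pi> \<alpha> (fst q) (snd q))"

definition marg1 :: "('i \<Rightarrow> 'a) pmf \<Rightarrow> 'i \<Rightarrow> 'a pmf" where
  "marg1 P i = map_pmf (\<lambda>x. x i) P"

definition marg2 :: "('i \<Rightarrow> 'a) pmf \<Rightarrow> 'i \<Rightarrow> 'i \<Rightarrow> ('a \<times> 'a) pmf" where
  "marg2 P i j = map_pmf (\<lambda>x. (x i, x j)) P"

text \<open>Causally consistent model: P is the output distribution on the network (outputs a_i, i in {1..n});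
  Q d pi is the output distribution of the non-fanout inflation of order d given by the
  permutations pi, with outputs indexed by (i,k), i in {1..n}, k in {1..d}.\<close>
definition causally_consistent ::
  "nat \<Rightarrow> 's set \<Rightarrow> ('s \<Rightarrow> nat set) \<Rightarrow> (nat \<Rightarrow> 'a) pmf
    \<Rightarrow> (nat \<Rightarrow> ('s \<Rightarrow> nat \<Rightarrow> nat \<Rightarrow> nat) \<Rightarrow> (nat \<times> nat \<Rightarrow> 'a) pmf) \<Rightarrow> bool" where
  "causally_consistent n S adj P Q \<longleftrightarrow>
     \<comment> \<open>C0\<close>
     (\<forall>i\<in>{1..n}. \<forall>j\<in>{1..n}. i \<noteq> j \<and> \<not> share_source S adj i j \<longrightarrow>
        marg2 P i j = pair_pmf (marg1 P i) (marg1 P j)) \<and>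
     (\<forall>d \<pi>. d \<ge> 2 \<and> valid_perms d S adj \<pi> \<longrightarrow>
        \<comment> \<open>C1\<close>
        (\<forall>i\<in>{1..n}. \<forall>k\<in>{1..d}. marg1 (Q d \<pi>) (i, k) = marg1 P i) \<and>
        (\<forall>i\<in>{1..n}. \<forall>k\<in>{1..d}. \<forall>j\<in>{1..n}. \<forall>l\<in>{1..d}.
           i \<noteq> j \<and> infl_share S adj \<pi> (i, k) (j, l) \<longrightarrow>
             marg2 (Q d \<pi>) (i, k) (j, l) = marg2 P i j) \<and>
        \<comment> \<open>C2\<close>
        (\<forall>i\<in>{1..n}. \<forall>k\<in>{1..d}. \<forall>j\<in>{1..n}. \<forall>l\<in>{1..d}.
           (i, k) \<noteq> (j, l) \<and> \<not> infl_share S adj \<pi> (i, k) (j, l) \<longrightarrow>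
             marg2 (Q d \<pi>) (i, k) (j, l) = pair_pmf (marg1 (Q d \<pi>) (i, k)) (marg1 (Q d \<pi>) (j, l))))"

definition covariance :: "(nat \<Rightarrow> 'a) pmf \<Rightarrow> (nat \<Rightarrow> 'a \<Rightarrow> complex) \<Rightarrow> nat \<Rightarrow> nat \<Rightarrow> complex" where
  "covariance P f i j =
     measure_pmf.expectation P (\<lambda>x. cnj (f i (x i)) * f j (x j))
     - cnj (measure_pmf.expectation P (\<lambda>x. f i (x i))) * measure_pmf.expectation P (\<lambda>x. f j (x j))"

definition schur_prod :: "(nat \<Rightarrow> nat \<Rightarrow> complex) \<Rightarrow> (nat \<Rightarrow> nat \<Rightarrow> complex) \<Rightarrow> nat \<Rightarrow> nat \<Rightarrow> complex" where
  "schur_prod M N i j = M i j * N i j"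

definition psd :: "nat \<Rightarrow> (nat \<Rightarrow> nat \<Rightarrow> complex) \<Rightarrow> bool" where
  "psd n M \<longleftrightarrow>
     (\<forall>i\<in>{1..n}. \<forall>j\<in>{1..n}. M j i = cnj (M i j)) \<and>
     (\<forall>v :: nat \<Rightarrow> complex.
        let q = (\<Sum>i\<in>{1..n}. \<Sum>j\<in>{1..n}. cnj (v i) * M i j * v j) in Im q = 0 \<and> Re q \<ge> 0)"

end

theory Submission
  imports Defs
begin

text \<open>
  Fix \<open>d \<ge> 2\<close>, put \<open>\<omega> = cis (2\<pi>/d)\<close> and give copy \<open>k\<close> of party \<open>i\<close> in a non-fanout
  inflation of order \<open>d\<close> the weight \<open>v i \<omega>\<^sup>k\<close>. Causal consistency says that two copies covary like
  the original parties when they share a source copy and are independent otherwise, so positivity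
  of the covariance form of the inflated outputs makes the Schur product of \<open>C(f\<^sub>1,\<dots>,f\<^sub>n)\<close>
  with \<open>inflation_phase\<close> positive semidefinite. If every source is wired to the copies of its
  smaller party in order and to those of its larger party rotated by \<open>s \<alpha>\<close> places, then
  \<open>inflation_phase / d\<close> is \<open>\<Gamma>\<^sub>\<epsilon>\<close> for the roots of unity \<open>\<epsilon> \<alpha> = \<omega>\<^sup>-\<^sup>s\<^sup>\<alpha>\<close>.
  Any phases are within \<open>2\<pi>/d\<close> of such roots, so the quadratic form of \<open>C \<circ> \<Gamma>\<^sub>\<epsilon>\<close> is at least
  \<open>-c/d\<close> for every \<open>d\<close>, hence nonnegative.
\<close>

section \<open>Covariance of complex random variables\<close>

definition pmf_cov :: "'b pmf \<Rightarrow> ('b \<Rightarrow> complex) \<Rightarrow> ('b \<Rightarrow> complex) \<Rightarrow> complex" where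
  "pmf_cov M X Y = measure_pmf.expectation M (\<lambda>x. cnj (X x) * Y x)
     - cnj (measure_pmf.expectation M X) * measure_pmf.expectation M Y"

lemma pmf_cov_swap: "pmf_cov M Y X = cnj (pmf_cov M X Y)"
proof -
  have "cnj (measure_pmf.expectation M (\<lambda>x. cnj (X x) * Y x)) = measure_pmf.expectation M (\<lambda>x. cnj (Y x) * X x)"
    by (subst Bochner_Integration.integral_cnj[symmetric]) (simp add: mult.commute)
  then show ?thesis
    by (simp add: pmf_cov_def mult.commute)
qed

lemma pmf_cov_map_pmf: "pmf_cov (map_pmf \<phi> M) X Y = pmf_cov M (\<lambda>x. X (\<phi> x)) (\<lambda>x. Y (\<phi> x))"
  by (simp add: pmf_cov_def)

lemma expectation_pair_pmf_mult:
  fixes g :: "'a::finite \<Rightarrow> complex" and h :: "'b::finite \<Rightarrow> complex"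
  shows "measure_pmf.expectation (pair_pmf A B) (\<lambda>z. g (fst z) * h (snd z))
       = measure_pmf.expectation A g * measure_pmf.expectation B h"
proof -
  have "measure_pmf.expectation (pair_pmf A B) (\<lambda>z. g (fst z) * h (snd z))
      = (\<Sum>z\<in>UNIV \<times> UNIV. pmf (pair_pmf A B) z *\<^sub>R (g (fst z) * h (snd z)))"
    by (subst integral_measure_pmf[of "UNIV \<times> UNIV"]) auto
  also have "\<dots> = (\<Sum>a\<in>UNIV. pmf A a *\<^sub>R g a) * (\<Sum>b\<in>UNIV. pmf B b *\<^sub>R h b)"
    unfolding sum.cartesian_product' sum_product
    by (intro sum.cong refl) (simp add: pmf_pair scaleR_conv_of_real mult_ac)
  finally show ?thesis
    by (simp add: integral_measure_pmf[of UNIV])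
qed

lemma pmf_cov_pair_pmf:
  fixes g :: "'a::finite \<Rightarrow> complex" and h :: "'b::finite \<Rightarrow> complex"
  shows "pmf_cov (pair_pmf A B) (\<lambda>z. g (fst z)) (\<lambda>z. h (snd z)) = 0"
  unfolding pmf_cov_def expectation_pair_pmf_mult[where g="\<lambda>a. cnj (g a)"] by simp

lemma integrable_measure_pmf_comp_finite:
  fixes g :: "'c::finite \<Rightarrow> 'd::{banach, second_countable_topology}" and h :: "'b \<Rightarrow> 'c"
  shows "integrable (measure_pmf M) (\<lambda>x. g (h x))"
proof (rule measure_pmf.integrable_const_bound)
  show "AE x in M. norm (g (h x)) \<le> Max (range (\<lambda>c. norm (g c)))"
    by (intro AE_I2 Max_ge) auto
qed simp

lemma Re_pmf_cov_self_nonneg: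
  fixes M :: "'b pmf"
  assumes "integrable M Z" and "integrable M (\<lambda>x. cnj (Z x) * Z x)"
  shows "0 \<le> Re (pmf_cov M Z Z)"
proof -
  define c where "c = measure_pmf.expectation M Z"
  have "pmf_cov M Z Z = measure_pmf.expectation M (\<lambda>x. cnj (Z x - c) * (Z x - c))"
    using assms by (simp add: pmf_cov_def c_def algebra_simps)
  also have "\<dots> = of_real (measure_pmf.expectation M (\<lambda>x. (cmod (Z x - c))\<^sup>2))"
    unfolding complex_norm_square integral_complex_of_real[symmetric] by (simp add: mult.commute)
  finally show ?thesis by simp
qed

lemma pmf_cov_sesquilinear:
  fixes M :: "'b pmf"
  assumes "finite I" and "\<And>p. p \<in> I \<Longrightarrow> integrable M (X p)"
    and "\<And>p q. p \<in> I \<Longrightarrow> q \<in> I \<Longrightarrow> integrable M (\<lambda>x. cnj (X p x) * X q x)"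
  shows "(\<Sum>p\<in>I. \<Sum>q\<in>I. cnj (w p) * w q * pmf_cov M (X p) (X q))
       = pmf_cov M (\<lambda>x. \<Sum>p\<in>I. w p * X p x) (\<lambda>x. \<Sum>p\<in>I. w p * X p x)"
  using assms
  by (simp add: pmf_cov_def cnj_sum sum_product sum_distrib_left sum_subtractf algebra_simps)

lemma pmf_cov_form_nonneg:
  fixes M :: "'b pmf"
  assumes "finite I" and "\<And>p. p \<in> I \<Longrightarrow> integrable M (X p)"
    and "\<And>p q. p \<in> I \<Longrightarrow> q \<in> I \<Longrightarrow> integrable M (\<lambda>x. cnj (X p x) * X q x)"
  shows "0 \<le> Re (\<Sum>p\<in>I. \<Sum>q\<in>I. cnj (w p) * w q * pmf_cov M (X p) (X q))"
proof -
  define Z where "Z = (\<lambda>x. \<Sum>p\<in>I. w p * X p x)"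
  have "(\<lambda>x. cnj (Z x) * Z x) = (\<lambda>x. \<Sum>p\<in>I. \<Sum>q\<in>I. (cnj (w p) * w q) * (cnj (X p x) * X q x))"
    unfolding Z_def cnj_sum sum_product by (intro ext sum.cong refl) (simp add: mult_ac)
  then have "0 \<le> Re (pmf_cov M Z Z)"
    using assms by (intro Re_pmf_cov_self_nonneg) (simp_all add: Z_def)
  then show ?thesis
    using pmf_cov_sesquilinear[OF assms, where w = w] by (simp add: Z_def)
qed

section \<open>Quadratic forms\<close>

definition quad_form :: "nat \<Rightarrow> (nat \<Rightarrow> nat \<Rightarrow> complex) \<Rightarrow> (nat \<Rightarrow> complex) \<Rightarrow> complex" where
  "quad_form n M v = (\<Sum>i\<in>{1..n}. \<Sum>j\<in>{1..n}. cnj (v i) * M i j * v j)"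

lemma psd_iff_quad_form:
  "psd n M \<longleftrightarrow> (\<forall>i\<in>{1..n}. \<forall>j\<in>{1..n}. M j i = cnj (M i j))
     \<and> (\<forall>v. Im (quad_form n M v) = 0 \<and> 0 \<le> Re (quad_form n M v))"
  unfolding psd_def quad_form_def Let_def ..

lemma quad_form_real_if_hermitian:
  assumes "\<forall>i\<in>{1..n}. \<forall>j\<in>{1..n}. M j i = cnj (M i j)"
  shows "Im (quad_form n M v) = 0"
proof -
  have "cnj (quad_form n M v) = (\<Sum>i\<in>{1..n}. \<Sum>j\<in>{1..n}. cnj (v j) * M j i * v i)"
    unfolding quad_form_def cnj_sum
  proof (intro sum.cong refl)
    fix i j
    assume "i \<in> {1..n}" "j \<in> {1..n}"
    then have "M j i = cnj (M i j)"
      using assms by blast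
    then show "cnj (cnj (v i) * M i j * v j) = cnj (v j) * M j i * v i"
      by (simp add: mult_ac)
  qed
  also have "\<dots> = quad_form n M v"
    unfolding quad_form_def by (rule sum.swap)
  finally show ?thesis
    by (simp add: complex_eq_iff)
qed

lemma hermitian_schur_prod:
  assumes "\<forall>i\<in>{1..n}. \<forall>j\<in>{1..n}. A j i = cnj (A i j)"
    and "\<forall>i\<in>{1..n}. \<forall>j\<in>{1..n}. B j i = cnj (B i j)"
  shows "\<forall>i\<in>{1..n}. \<forall>j\<in>{1..n}. schur_prod A B j i = cnj (schur_prod A B i j)"
proof (intro ballI)
  fix i j
  assume "i \<in> {1..n}" "j \<in> {1..n}"
  then have "A j i = cnj (A i j)" "B j i = cnj (B i j)"
    using assms by blast+
  then show "schur_prod A B j i = cnj (schur_prod A B i j)"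
    by (simp add: schur_prod_def)
qed

lemma quad_form_scale: "quad_form n (\<lambda>i j. c * M i j) v = c * quad_form n M v"
  by (simp add: quad_form_def sum_distrib_left mult_ac)

lemma norm_quad_form_diff_le:
  "cmod (quad_form n A v - quad_form n B v)
     \<le> (\<Sum>i\<in>{1..n}. \<Sum>j\<in>{1..n}. cmod (v i) * cmod (v j) * cmod (A i j - B i j))"
proof -
  have "quad_form n A v - quad_form n B v = (\<Sum>i\<in>{1..n}. \<Sum>j\<in>{1..n}. cnj (v i) * v j * (A i j - B i j))"
    unfolding quad_form_def by (simp add: sum_subtractf algebra_simps)
  also have "cmod \<dots> \<le> (\<Sum>i\<in>{1..n}. \<Sum>j\<in>{1..n}. cmod (cnj (v i) * v j * (A i j - B i j)))"
    by (rule order_trans[OF norm_sum sum_mono[OF norm_sum]])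
  finally show ?thesis by (simp add: norm_mult)
qed

lemma Re_quad_form_ge_perturb:
  assumes "\<And>i j. i \<in> {1..n} \<Longrightarrow> j \<in> {1..n} \<Longrightarrow> cmod (A i j - B i j) \<le> e * c i j"
  shows "Re (quad_form n B v) - e * (\<Sum>i\<in>{1..n}. \<Sum>j\<in>{1..n}. cmod (v i) * cmod (v j) * c i j)
     \<le> Re (quad_form n A v)"
proof -
  have "cmod (quad_form n A v - quad_form n B v)
      \<le> (\<Sum>i\<in>{1..n}. \<Sum>j\<in>{1..n}. cmod (v i) * cmod (v j) * (e * c i j))"
    by (intro order_trans[OF norm_quad_form_diff_le] sum_mono mult_left_mono assms; simp)
  also have "\<dots> = e * (\<Sum>i\<in>{1..n}. \<Sum>j\<in>{1..n}. cmod (v i) * cmod (v j) * c i j)"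
    by (simp add: sum_distrib_left mult_ac)
  finally show ?thesis
    using abs_Re_le_cmod[of "quad_form n A v - quad_form n B v"] by simp
qed

lemma nonneg_if_ge_neg_const_over_nat:
  fixes x c :: real
  assumes "\<And>d::nat. d \<ge> 2 \<Longrightarrow> - c / real d \<le> x"
  shows "0 \<le> x"
proof (rule LIMSEQ_le_const2)
  show "(\<lambda>d. - c / real d) \<longlonglongrightarrow> 0"
    by (rule lim_const_over_n)
  show "\<exists>N. \<forall>d\<ge>N. - c / real d \<le> x"
    using assms by blast
qed

section \<open>Roots of unity\<close>

lemma norm_cis_minus_one_le: "cmod (cis t - 1) \<le> \<bar>t\<bar>"
proof -
  have "(cmod (cis t - 1))\<^sup>2 = 2 - 2 * cos t"
    using sin_cos_squared_add[of t] by (simp add: cmod_def power2_eq_square algebra_simps)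
  also have "\<dots> = (2 * sin (t/2))\<^sup>2"
    using cos_double_sin[of "t/2"] by (simp add: power_mult_distrib)
  moreover have "\<bar>2 * sin (t/2)\<bar> \<le> \<bar>t\<bar>"
    using abs_sin_x_le_abs_x[of "t/2"] by simp
  ultimately show ?thesis
    by (metis abs_le_square_iff abs_norm_cancel)
qed

lemma norm_cis_diff_le: "cmod (cis a - cis b) \<le> \<bar>a - b\<bar>"
proof -
  have "cis a - cis b = cis b * (cis (a - b) - 1)"
    by (simp add: algebra_simps cis_mult)
  then show ?thesis
    using norm_cis_minus_one_le[of "a - b"] by (simp add: norm_mult)
qed

lemma exists_root_of_unity_near:
  assumes "cmod z = 1" and "d > 0"
  shows "\<exists>s::nat. cmod (cis (2*pi/d) ^ s - z) \<le> 2*pi/d"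
proof -
  define \<theta> where "\<theta> = Arg z + 2*pi"
  have "z \<noteq> 0"
    using assms(1) by auto
  then have "z = cis (Arg z)"
    using assms(1) by (simp add: cis_Arg sgn_div_norm)
  also have "\<dots> = cis \<theta>"
    unfolding \<theta>_def by (simp add: cis_mult[symmetric])
  finally have z: "z = cis \<theta>" .
  have "\<theta> \<ge> 0"
    using Arg_bounded[of z] by (simp add: \<theta>_def)
  define h where "h = 2*pi/d"
  have "h > 0"
    using assms(2) by (simp add: h_def)
  define s where "s = nat \<lfloor>\<theta> / h\<rfloor>"
  have "real s = of_int \<lfloor>\<theta> / h\<rfloor>"
    using \<open>\<theta> \<ge> 0\<close> \<open>h > 0\<close> by (simp add: s_def)
  then have "real s \<le> \<theta> / h" "\<theta> / h < real s + 1"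
    by linarith+
  then have "real s * h \<le> \<theta>" "\<theta> < real s * h + h"
    using \<open>h > 0\<close> by (simp_all add: pos_le_divide_eq pos_divide_less_eq algebra_simps)
  then have "cmod (cis (real s * h) - cis \<theta>) \<le> h"
    using norm_cis_diff_le[of "real s * h" \<theta>] by simp
  then have "cmod (cis (2*pi/d) ^ s - z) \<le> 2*pi/d"
    by (simp add: z Complex.DeMoivre h_def)
  then show ?thesis ..
qed

lemma exists_root_of_unity_exponents:
  assumes "\<forall>\<alpha>\<in>S. cmod (z \<alpha>) = 1" and "d > 0"
  shows "\<exists>s. \<forall>\<alpha>\<in>S. cmod (cis (2*pi/d) ^ s \<alpha> - z \<alpha>) \<le> 2*pi/d"
  using assms by (intro bchoice ballI exists_root_of_unity_near) auto

lemma power_mod_if_power_eq_1: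
  fixes x :: "'a::monoid_mult"
  assumes "x ^ d = 1"
  shows "x ^ (m mod d) = x ^ m"
proof -
  have "x ^ m = (x ^ d) ^ (m div d) * x ^ (m mod d)"
    by (metis mult_div_mod_eq power_add power_mult)
  then show ?thesis
    using assms by simp
qed

lemma cnj_power_mult_power_eq_1:
  assumes "cmod z = 1"
  shows "cnj z ^ k * z ^ k = 1"
proof -
  have "cnj z * z = 1"
    using complex_norm_square[of z] assms by (simp add: mult.commute)
  then show ?thesis
    by (metis power_mult_distrib power_one)
qed

section \<open>Networks and their inflations\<close>

lemma adj_eq_doubleton:
  assumes "bipartite_network n S adj" and "\<alpha> \<in> S" and "i \<in> adj \<alpha>" "j \<in> adj \<alpha>" "i \<noteq> j"
  shows "adj \<alpha> = {i, j}"
proof -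
  have "card (adj \<alpha>) = 2"
    using assms(1,2) by (simp add: bipartite_network_def)
  then show ?thesis
    using assms(3-) unfolding card_2_iff by auto
qed

lemma shared_source_unique:
  assumes net: "bipartite_network n S adj" and "\<alpha> \<in> S" "\<beta> \<in> S"
    and "i \<in> adj \<alpha>" "j \<in> adj \<alpha>" "i \<in> adj \<beta>" "j \<in> adj \<beta>" "i \<noteq> j"
  shows "\<alpha> = \<beta>"
proof (rule ccontr)
  assume "\<alpha> \<noteq> \<beta>"
  moreover have "adj \<alpha> = adj \<beta>"
    using adj_eq_doubleton[OF net] assms(2-) by metis
  ultimately show False
    using net assms(2,3) unfolding bipartite_network_def by blast
qed

lemma infl_share_sym: "infl_share S adj \<pi> p q = infl_share S adj \<pi> q p"
  unfolding infl_share_def by auto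

lemma infl_share_same_party_iff:
  assumes "bipartite_network n S adj" and "valid_perms d S adj \<pi>" and "i \<in> {1..n}"
  shows "infl_share S adj \<pi> (i, k) (i, l) \<longleftrightarrow> k = l"
proof
  assume "infl_share S adj \<pi> (i, k) (i, l)"
  then obtain \<alpha> where "\<alpha> \<in> S" "i \<in> adj \<alpha>" "\<pi> \<alpha> i k = \<pi> \<alpha> i l"
    unfolding infl_share_def by auto
  moreover from calculation have "inj (\<pi> \<alpha> i)"
    using assms(2) permutes_inj unfolding valid_perms_def by blast
  ultimately show "k = l"
    by (auto dest: injD)
next
  assume "k = l"
  then show "infl_share S adj \<pi> (i, k) (i, l)"
    using assms(1,3) unfolding bipartite_network_def infl_share_def by auto
qed

lemma causally_consistent_network_indep:
  assumes "causally_consistent n S adj P Q" and "i \<in> {1..n}" "j \<in> {1..n}" "i \<noteq> j"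
    and "\<not> share_source S adj i j"
  shows "marg2 P i j = pair_pmf (marg1 P i) (marg1 P j)"
  by (rule conjunct1[OF assms(1)[unfolded causally_consistent_def], rule_format, OF assms(2,3) conjI[OF assms(4,5)]])

lemma causally_consistent_inflation:
  assumes "causally_consistent n S adj P Q" and "d \<ge> 2" and "valid_perms d S adj \<pi>"
    and "i \<in> {1..n}" "k \<in> {1..d}" "j \<in> {1..n}" "l \<in> {1..d}"
  shows "marg1 (Q d \<pi>) (i, k) = marg1 P i"
    and "i \<noteq> j \<Longrightarrow> infl_share S adj \<pi> (i, k) (j, l) \<Longrightarrow> marg2 (Q d \<pi>) (i, k) (j, l) = marg2 P i j"
    and "(i, k) \<noteq> (j, l) \<Longrightarrow> \<not> infl_share S adj \<pi> (i, k) (j, l) \<Longrightarrow>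
           marg2 (Q d \<pi>) (i, k) (j, l) = pair_pmf (marg1 (Q d \<pi>) (i, k)) (marg1 (Q d \<pi>) (j, l))"
proof -
  note inflation = conjunct2[OF assms(1)[unfolded causally_consistent_def], rule_format, OF conjI[OF assms(2,3)]]
  show "marg1 (Q d \<pi>) (i, k) = marg1 P i"
    by (rule inflation[THEN conjunct1, rule_format, OF assms(4,5)])
  show "i \<noteq> j \<Longrightarrow> infl_share S adj \<pi> (i, k) (j, l) \<Longrightarrow> marg2 (Q d \<pi>) (i, k) (j, l) = marg2 P i j"
    by (rule inflation[THEN conjunct2, THEN conjunct1, rule_format, OF assms(4-7) conjI])
  show "(i, k) \<noteq> (j, l) \<Longrightarrow> \<not> infl_share S adj \<pi> (i, k) (j, l) \<Longrightarrow>
      marg2 (Q d \<pi>) (i, k) (j, l) = pair_pmf (marg1 (Q d \<pi>) (i, k)) (marg1 (Q d \<pi>) (j, l))"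
    by (rule inflation[THEN conjunct2, THEN conjunct2, rule_format, OF assms(4-7) conjI])
qed

lemma covariance_eq_pmf_cov: "covariance P f i j = pmf_cov P (\<lambda>x. f i (x i)) (\<lambda>x. f j (x j))"
  unfolding covariance_def pmf_cov_def ..

lemma covariance_swap: "covariance P f j i = cnj (covariance P f i j)"
  unfolding covariance_eq_pmf_cov by (rule pmf_cov_swap)

lemma pmf_cov_marg2:
  "pmf_cov R (\<lambda>x. g (x p)) (\<lambda>x. h (x q)) = pmf_cov (marg2 R p q) (\<lambda>z. g (fst z)) (\<lambda>z. h (snd z))"
  unfolding marg2_def pmf_cov_map_pmf by simp

lemma marg2_diag: "marg2 R p p = map_pmf (\<lambda>a. (a, a)) (marg1 R p)"
  unfolding marg2_def marg1_def by (simp add: map_pmf_comp)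

lemma covariance_eq_0_if_no_shared_source:
  fixes P :: "(nat \<Rightarrow> 'a::finite) pmf"
  assumes "causally_consistent n S adj P Q" and "i \<in> {1..n}" "j \<in> {1..n}" "i \<noteq> j"
    and "\<not> share_source S adj i j"
  shows "covariance P f i j = 0"
  unfolding covariance_eq_pmf_cov pmf_cov_marg2 causally_consistent_network_indep[OF assms]
  by (rule pmf_cov_pair_pmf)

lemma inflation_pmf_cov:
  fixes P :: "(nat \<Rightarrow> 'a::finite) pmf"
  assumes net: "bipartite_network n S adj" and model: "causally_consistent n S adj P Q"
    and d: "d \<ge> 2" and \<pi>: "valid_perms d S adj \<pi>"
    and ik: "i \<in> {1..n}" "k \<in> {1..d}" and jl: "j \<in> {1..n}" "l \<in> {1..d}"
  shows "pmf_cov (Q d \<pi>) (\<lambda>x. f i (x (i, k))) (\<lambda>x. f j (x (j, l)))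
       = (if infl_share S adj \<pi> (i, k) (j, l) then covariance P f i j else 0)"
proof (cases "infl_share S adj \<pi> (i, k) (j, l)")
  case share: True
  have "marg2 (Q d \<pi>) (i, k) (j, l) = marg2 P i j"
  proof (cases "i = j")
    case True
    then have "k = l"
      using share infl_share_same_party_iff[OF net \<pi> ik(1)] by simp
    then show ?thesis
      using True causally_consistent_inflation(1)[OF model d \<pi> ik jl] by (simp add: marg2_diag)
  qed (use share causally_consistent_inflation(2)[OF model d \<pi> ik jl] in simp)
  then show ?thesis
    using share by (simp add: covariance_eq_pmf_cov pmf_cov_marg2)
next
  case False
  moreover have "(i, k) \<noteq> (j, l)"
    using False infl_share_same_party_iff[OF net \<pi> ik(1)] by auto
  ultimately show ?thesis
    using causally_consistent_inflation(3)[OF model d \<pi> ik jl]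
    by (simp add: pmf_cov_marg2 pmf_cov_pair_pmf)
qed

definition inflation_phase ::
  "'s set \<Rightarrow> ('s \<Rightarrow> nat set) \<Rightarrow> ('s \<Rightarrow> nat \<Rightarrow> nat \<Rightarrow> nat) \<Rightarrow> nat \<Rightarrow> nat \<Rightarrow> nat \<Rightarrow> complex" where
  "inflation_phase S adj \<pi> d i j = (\<Sum>k\<in>{1..d}. \<Sum>l\<in>{1..d}.
     if infl_share S adj \<pi> (i, k) (j, l) then cnj (cis (2*pi/d) ^ k) * cis (2*pi/d) ^ l else 0)"

lemma inflation_form_nonneg:
  fixes P :: "(nat \<Rightarrow> 'a::finite) pmf"
  assumes net: "bipartite_network n S adj" and model: "causally_consistent n S adj P Q"
    and d: "d \<ge> 2" and \<pi>: "valid_perms d S adj \<pi>"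
  shows "0 \<le> Re (quad_form n (schur_prod (covariance P f) (inflation_phase S adj \<pi> d)) v)"
proof -
  define \<omega> where "\<omega> = cis (2*pi/d)"
  define X where "X = (\<lambda>(p :: nat \<times> nat) (x :: nat \<times> nat \<Rightarrow> 'a). f (fst p) (x p))"
  define w where "w = (\<lambda>p :: nat \<times> nat. v (fst p) * \<omega> ^ snd p)"
  define I where "I = {1..n} \<times> {1..d}"
  have "0 \<le> Re (\<Sum>p\<in>I. \<Sum>q\<in>I. cnj (w p) * w q * pmf_cov (Q d \<pi>) (X p) (X q))"
  proof (rule pmf_cov_form_nonneg)
    show "integrable (Q d \<pi>) (X p)" for p
      using integrable_measure_pmf_comp_finite[where g = "f (fst p)" and h = "\<lambda>x. x p"]
      by (simp add: X_def)
    show "integrable (Q d \<pi>) (\<lambda>x. cnj (X p x) * X q x)" for p q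
      using integrable_measure_pmf_comp_finite[where g = "\<lambda>(a, b). cnj (f (fst p) a) * f (fst q) b"
          and h = "\<lambda>x. (x p, x q)"]
      by (simp add: X_def)
  qed (simp add: I_def)
  also have "(\<Sum>p\<in>I. \<Sum>q\<in>I. cnj (w p) * w q * pmf_cov (Q d \<pi>) (X p) (X q))
     = (\<Sum>i\<in>{1..n}. \<Sum>j\<in>{1..n}. \<Sum>k\<in>{1..d}. \<Sum>l\<in>{1..d}.
          cnj (w (i, k)) * w (j, l) * pmf_cov (Q d \<pi>) (X (i, k)) (X (j, l)))"
    unfolding I_def sum.cartesian_product' by (rule sum.cong[OF refl], rule sum.swap)
  also have "\<dots> = quad_form n (schur_prod (covariance P f) (inflation_phase S adj \<pi> d)) v"
    unfolding quad_form_def schur_prod_def inflation_phase_def sum_distrib_left sum_distrib_right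
    using inflation_pmf_cov[OF net model d \<pi>]
    by (intro sum.cong refl) (simp add: X_def w_def \<omega>_def mult_ac)
  finally show ?thesis .
qed

lemma inflation_phase_swap: "inflation_phase S adj \<pi> d j i = cnj (inflation_phase S adj \<pi> d i j)"
  unfolding inflation_phase_def cnj_sum
  by (subst sum.swap) (intro sum.cong refl, simp add: infl_share_sym[of S adj \<pi> "(j, _)"] mult.commute)

lemma inflation_phase_diag:
  assumes "bipartite_network n S adj" and "valid_perms d S adj \<pi>" and "i \<in> {1..n}"
  shows "inflation_phase S adj \<pi> d i i = of_nat d"
proof -
  have "inflation_phase S adj \<pi> d i i = (\<Sum>k\<in>{1..d}. cnj (cis (2*pi/d) ^ k) * cis (2*pi/d) ^ k)"
    unfolding inflation_phase_def infl_share_same_party_iff[OF assms] by (simp add: if_distrib sum.delta)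
  also have "\<dots> = of_nat d"
    by (simp add: cnj_power_mult_power_eq_1)
  finally show ?thesis .
qed

section \<open>Cyclic inflations\<close>

lemma mod_add_right_cancel_less:
  fixes a b s d :: nat
  assumes "a < d" "b < d" and "(a + s) mod d = (b + s) mod d"
  shows "a = b"
proof -
  have "a = b" if "a \<le> b" "b < d" "(a + s) mod d = (b + s) mod d" for a b
  proof -
    have "d dvd b - a"
      using that mod_eq_dvd_iff_nat[of "a + s" "b + s" d] by simp
    then show "a = b"
      using that by (metis diff_is_0_eq' dvd_imp_le le_antisym less_imp_diff_less not_le zero_less_diff)
  qed
  then show ?thesis
    using assms by (metis nat_le_linear)
qed

definition cyclic_shift :: "nat \<Rightarrow> nat \<Rightarrow> nat \<Rightarrow> nat" where
  "cyclic_shift d s k = (if k \<in> {1..d} then (k - 1 + s) mod d + 1 else k)"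

lemma cyclic_shift_in:
  assumes "k \<in> {1..d}"
  shows "cyclic_shift d s k \<in> {1..d}"
proof -
  have "(k - 1 + s) mod d < d"
    using assms by simp
  then show ?thesis
    using assms by (simp add: cyclic_shift_def Suc_le_eq)
qed

lemma cyclic_shift_permutes:
  assumes "d > 0"
  shows "cyclic_shift d s permutes {1..d}"
proof (rule bij_imp_permutes)
  have "inj_on (cyclic_shift d s) {1..d}"
  proof (rule inj_onI)
    fix x y
    assume "x \<in> {1..d}" "y \<in> {1..d}" "cyclic_shift d s x = cyclic_shift d s y"
    moreover from calculation have "(x - 1 + s) mod d = (y - 1 + s) mod d"
      by (simp add: cyclic_shift_def)
    ultimately have "x - 1 = y - 1"
      using mod_add_right_cancel_less[of "x - 1" d "y - 1" s] by auto
    then show "x = y"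
      using \<open>x \<in> {1..d}\<close> \<open>y \<in> {1..d}\<close> by auto
  qed
  moreover have "cyclic_shift d s ` {1..d} \<subseteq> {1..d}"
    using cyclic_shift_in by blast
  ultimately show "bij_betw (cyclic_shift d s) {1..d} {1..d}"
    by (simp add: bij_betw_def endo_inj_surj)
qed (auto simp: cyclic_shift_def)

lemma cis_power_cyclic_shift:
  assumes "k \<in> {1..d}"
  shows "cis (2*pi/d) ^ cyclic_shift d s k = cis (2*pi/d) ^ k * cis (2*pi/d) ^ s"
proof -
  have "d > 0"
    using assms by simp
  then have "cis (2*pi/d) ^ d = 1"
    by (simp add: Complex.DeMoivre)
  have "cis (2*pi/d) ^ cyclic_shift d s k = cis (2*pi/d) ^ ((k - 1 + s) mod d + 1)"
    using assms by (simp add: cyclic_shift_def)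
  also have "\<dots> = cis (2*pi/d) ^ (k - 1 + s + 1)"
    by (simp only: power_add power_mod_if_power_eq_1[OF \<open>cis (2*pi/d) ^ d = 1\<close>])
  also have "k - 1 + s + 1 = k + s"
    using assms by simp
  finally show ?thesis
    by (simp add: power_add)
qed

definition cyclic_inflation :: "('s \<Rightarrow> nat set) \<Rightarrow> nat \<Rightarrow> ('s \<Rightarrow> nat) \<Rightarrow> 's \<Rightarrow> nat \<Rightarrow> nat \<Rightarrow> nat" where
  "cyclic_inflation adj d s \<alpha> i = (if i = Max (adj \<alpha>) then cyclic_shift d (s \<alpha>) else id)"

lemma valid_perms_cyclic_inflation: "d > 0 \<Longrightarrow> valid_perms d S adj (cyclic_inflation adj d s)"
  unfolding valid_perms_def cyclic_inflation_def
  using cyclic_shift_permutes permutes_id by (auto simp: id_def)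

lemma inflation_phase_cyclic:
  assumes net: "bipartite_network n S adj" and "\<alpha> \<in> S" "i \<in> adj \<alpha>" "j \<in> adj \<alpha>" "i < j" and "d > 0"
  shows "inflation_phase S adj (cyclic_inflation adj d s) d i j = of_nat d * cnj (cis (2*pi/d) ^ s \<alpha>)"
proof -
  define \<omega> where "\<omega> = cis (2*pi/d)"
  have "Max (adj \<alpha>) = j"
    using adj_eq_doubleton[OF net assms(2-4)] assms(5) by simp
  have share: "infl_share S adj (cyclic_inflation adj d s) (i, k) (j, l) \<longleftrightarrow> k = cyclic_shift d (s \<alpha>) l"
    for k l
  proof -
    have "infl_share S adj (cyclic_inflation adj d s) (i, k) (j, l)
        \<longleftrightarrow> cyclic_inflation adj d s \<alpha> i k = cyclic_inflation adj d s \<alpha> j l"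
      unfolding infl_share_def using shared_source_unique[OF net] assms(2-5) by auto
    then show ?thesis
      using \<open>Max (adj \<alpha>) = j\<close> \<open>i < j\<close> by (simp add: cyclic_inflation_def)
  qed
  have "inflation_phase S adj (cyclic_inflation adj d s) d i j
      = (\<Sum>l\<in>{1..d}. \<Sum>k\<in>{1..d}. if k = cyclic_shift d (s \<alpha>) l then cnj (\<omega> ^ k) * \<omega> ^ l else 0)"
    unfolding inflation_phase_def share \<omega>_def by (rule sum.swap)
  also have "\<dots> = (\<Sum>l\<in>{1..d}. cnj (\<omega> ^ cyclic_shift d (s \<alpha>) l) * \<omega> ^ l)"
    by (intro sum.cong refl) (simp only: sum.delta finite_atLeastAtMost cyclic_shift_in if_True)
  also have "\<dots> = (\<Sum>l\<in>{1..d}. cnj (\<omega> ^ s \<alpha>))"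
  proof (rule sum.cong[OF refl])
    fix l
    assume "l \<in> {1..d}"
    then have shift: "\<omega> ^ cyclic_shift d (s \<alpha>) l = \<omega> ^ l * \<omega> ^ s \<alpha>"
      unfolding \<omega>_def by (rule cis_power_cyclic_shift)
    have "cnj (\<omega> ^ l) * \<omega> ^ l = 1"
      using cnj_power_mult_power_eq_1[of \<omega> l] by (simp add: \<omega>_def)
    then have "cnj (\<omega> ^ s \<alpha>) * (cnj (\<omega> ^ l) * \<omega> ^ l) = cnj (\<omega> ^ s \<alpha>)"
      by simp
    then show "cnj (\<omega> ^ cyclic_shift d (s \<alpha>) l) * \<omega> ^ l = cnj (\<omega> ^ s \<alpha>)"
      by (simp only: shift complex_cnj_mult mult_ac)
  qed
  finally show ?thesis
    by (simp add: \<omega>_def)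
qed

lemma norm_diff_cyclic_inflation_phase_le:
  assumes net: "bipartite_network n S adj" and "d > 0"
    and s: "\<forall>\<alpha>\<in>S. cmod (cis (2*pi/d) ^ s \<alpha> - cnj (\<epsilon> \<alpha>)) \<le> 2*pi/d"
    and diag: "\<forall>i\<in>{1..n}. \<gamma> i i = 1"
    and up: "\<forall>\<alpha>\<in>S. \<forall>i\<in>adj \<alpha>. \<forall>j\<in>adj \<alpha>. i < j \<longrightarrow> \<gamma> i j = \<epsilon> \<alpha>"
    and low: "\<forall>\<alpha>\<in>S. \<forall>i\<in>adj \<alpha>. \<forall>j\<in>adj \<alpha>. i > j \<longrightarrow> \<gamma> i j = cnj (\<epsilon> \<alpha>)"
    and "i \<in> {1..n}" and "i = j \<or> share_source S adj i j"
  shows "cmod (\<gamma> i j - inflation_phase S adj (cyclic_inflation adj d s) d i j / d) \<le> 2*pi/d"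
proof -
  define \<omega> where "\<omega> = cis (2*pi/d)"
  note \<pi> = valid_perms_cyclic_inflation[OF \<open>d > 0\<close>]
  consider "i = j" | \<alpha> where "\<alpha> \<in> S" "i \<in> adj \<alpha>" "j \<in> adj \<alpha>" "i < j"
    | \<alpha> where "\<alpha> \<in> S" "i \<in> adj \<alpha>" "j \<in> adj \<alpha>" "j < i"
    using assms(8) linorder_neqE_nat unfolding share_source_def by blast
  then show ?thesis
  proof cases
    case 1
    then show ?thesis
      using inflation_phase_diag[OF net \<pi> \<open>i \<in> {1..n}\<close>] diag \<open>i \<in> {1..n}\<close> \<open>d > 0\<close> by simp
  next
    case (2 \<alpha>)
    have "\<gamma> i j - inflation_phase S adj (cyclic_inflation adj d s) d i j / d = \<epsilon> \<alpha> - cnj (\<omega> ^ s \<alpha>)"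
      using 2 up inflation_phase_cyclic[OF net 2 \<open>d > 0\<close>] \<open>d > 0\<close> by (simp add: \<omega>_def)
    also have "cmod \<dots> = cmod (\<omega> ^ s \<alpha> - cnj (\<epsilon> \<alpha>))"
      by (metis complex_cnj_cnj complex_cnj_diff complex_mod_cnj norm_minus_commute)
    finally show ?thesis
      using s 2 by (simp add: \<omega>_def)
  next
    case (3 \<alpha>)
    have "\<gamma> i j - inflation_phase S adj (cyclic_inflation adj d s) d i j / d = cnj (\<epsilon> \<alpha>) - \<omega> ^ s \<alpha>"
      using 3 low inflation_phase_cyclic[OF net 3(1,3,2,4) \<open>d > 0\<close>] \<open>d > 0\<close>
        inflation_phase_swap[of S adj "cyclic_inflation adj d s" d i j]
      by (simp add: \<omega>_def)
    then show ?thesis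
      using s 3 by (simp add: \<omega>_def norm_minus_commute)
  qed
qed

section \<open>Approximating arbitrary phases\<close>

lemma Re_quad_form_schur_cyclic_phase_nonneg:
  fixes P :: "(nat \<Rightarrow> 'a::finite) pmf"
  assumes "bipartite_network n S adj" and "causally_consistent n S adj P Q" and "d \<ge> 2"
  shows "0 \<le> Re (quad_form n (schur_prod (covariance P f)
                 (\<lambda>i j. inflation_phase S adj (cyclic_inflation adj d s) d i j / d)) v)"
proof -
  have "schur_prod (covariance P f) (inflation_phase S adj (cyclic_inflation adj d s) d)
      = (\<lambda>i j. of_nat d * schur_prod (covariance P f)
                 (\<lambda>i j. inflation_phase S adj (cyclic_inflation adj d s) d i j / d) i j)"
    using assms(3) by (simp add: schur_prod_def fun_eq_iff)
  moreover have "0 \<le> Re (quad_form n (schur_prod (covariance P f)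
                 (inflation_phase S adj (cyclic_inflation adj d s) d)) v)"
    using assms by (intro inflation_form_nonneg valid_perms_cyclic_inflation) simp_all
  ultimately show ?thesis
    using assms(3) by (simp add: quad_form_scale zero_le_mult_iff)
qed

lemma Re_quad_form_schur_lower_bound:
  fixes P :: "(nat \<Rightarrow> 'a::finite) pmf" and d :: nat
  assumes net: "bipartite_network n S adj" and model: "causally_consistent n S adj P Q"
    and eps: "\<forall>\<alpha>\<in>S. cmod (\<epsilon> \<alpha>) = 1"
    and diag: "\<forall>i\<in>{1..n}. \<gamma> i i = 1"
    and up: "\<forall>\<alpha>\<in>S. \<forall>i\<in>adj \<alpha>. \<forall>j\<in>adj \<alpha>. i < j \<longrightarrow> \<gamma> i j = \<epsilon> \<alpha>"
    and low: "\<forall>\<alpha>\<in>S. \<forall>i\<in>adj \<alpha>. \<forall>j\<in>adj \<alpha>. i > j \<longrightarrow> \<gamma> i j = cnj (\<epsilon> \<alpha>)"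
    and d: "d \<ge> 2"
  shows "- (2*pi * (\<Sum>i\<in>{1..n}. \<Sum>j\<in>{1..n}. cmod (v i) * cmod (v j) * cmod (covariance P f i j))) / d
     \<le> Re (quad_form n (schur_prod (covariance P f) \<gamma>) v)"
proof -
  define C where "C = covariance P f"
  obtain s where s: "\<forall>\<alpha>\<in>S. cmod (cis (2*pi/d) ^ s \<alpha> - cnj (\<epsilon> \<alpha>)) \<le> 2*pi/d"
    using exists_root_of_unity_exponents[of S "\<lambda>\<alpha>. cnj (\<epsilon> \<alpha>)" d] eps d by auto
  define G where "G = (\<lambda>i j. inflation_phase S adj (cyclic_inflation adj d s) d i j / d)"
  have "cmod (schur_prod C \<gamma> i j - schur_prod C G i j) \<le> 2*pi/d * cmod (C i j)"
    if "i \<in> {1..n}" "j \<in> {1..n}" for i j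
  proof (cases "i = j \<or> share_source S adj i j")
    case True
    have "cmod (schur_prod C \<gamma> i j - schur_prod C G i j) = cmod (C i j) * cmod (\<gamma> i j - G i j)"
      by (simp add: schur_prod_def norm_mult flip: right_diff_distrib)
    also have "\<dots> \<le> cmod (C i j) * (2*pi/d)"
      unfolding G_def using norm_diff_cyclic_inflation_phase_le[OF net _ s diag up low that(1) True] d
      by (intro mult_left_mono) simp_all
    finally show ?thesis
      by (simp add: mult.commute)
  next
    case False
    then show ?thesis
      using covariance_eq_0_if_no_shared_source[OF model that] by (simp add: C_def schur_prod_def)
  qed
  then have "Re (quad_form n (schur_prod C G) v)
      - 2*pi/d * (\<Sum>i\<in>{1..n}. \<Sum>j\<in>{1..n}. cmod (v i) * cmod (v j) * cmod (C i j))
      \<le> Re (quad_form n (schur_prod C \<gamma>) v)"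
    by (rule Re_quad_form_ge_perturb)
  moreover have "0 \<le> Re (quad_form n (schur_prod C G) v)"
    unfolding C_def G_def using net model d by (rule Re_quad_form_schur_cyclic_phase_nonneg)
  ultimately show ?thesis
    unfolding C_def by simp
qed

theorem mainTheorem6:
  fixes n :: nat and S :: "'s set" and adj :: "'s \<Rightarrow> nat set"
    and P :: "(nat \<Rightarrow> 'a::finite) pmf"
    and Q :: "nat \<Rightarrow> ('s \<Rightarrow> nat \<Rightarrow> nat \<Rightarrow> nat) \<Rightarrow> (nat \<times> nat \<Rightarrow> 'a) pmf"
    and f :: "nat \<Rightarrow> 'a \<Rightarrow> complex"
    and \<epsilon> :: "'s \<Rightarrow> complex"
    and \<gamma> :: "nat \<Rightarrow> nat \<Rightarrow> complex"
  assumes net: "bipartite_network n S adj"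
    and model: "causally_consistent n S adj P Q"
    and eps: "\<forall>\<alpha>\<in>S. cmod (\<epsilon> \<alpha>) = 1"
    and herm: "\<forall>i\<in>{1..n}. \<forall>j\<in>{1..n}. \<gamma> j i = cnj (\<gamma> i j)"
    and diag: "\<forall>i\<in>{1..n}. \<gamma> i i = 1"
    and up: "\<forall>\<alpha>\<in>S. \<forall>i\<in>adj \<alpha>. \<forall>j\<in>adj \<alpha>. i < j \<longrightarrow> \<gamma> i j = \<epsilon> \<alpha>"
    and low: "\<forall>\<alpha>\<in>S. \<forall>i\<in>adj \<alpha>. \<forall>j\<in>adj \<alpha>. i > j \<longrightarrow> \<gamma> i j = cnj (\<epsilon> \<alpha>)"
  shows "psd n (schur_prod (covariance P f) \<gamma>)"
proof -
  have hermitian: "\<forall>i\<in>{1..n}. \<forall>j\<in>{1..n}.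
      schur_prod (covariance P f) \<gamma> j i = cnj (schur_prod (covariance P f) \<gamma> i j)"
    using covariance_swap herm by (intro hermitian_schur_prod) blast+
  have nonneg: "0 \<le> Re (quad_form n (schur_prod (covariance P f) \<gamma>) v)" for v
    by (rule nonneg_if_ge_neg_const_over_nat)
      (rule Re_quad_form_schur_lower_bound[OF net model eps diag up low])
  have real: "Im (quad_form n (schur_prod (covariance P f) \<gamma>) v) = 0" for v
    using hermitian by (rule quad_form_real_if_hermitian)
  show ?thesis
    unfolding psd_iff_quad_form by (intro conjI allI hermitian nonneg real)
qed

end
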